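(* Let $V$ be a real inner product space with norm $\lVert x\rVert=\sqrt{\langle x,x\rangle}$, and consider $n$ agents running the ApproachExtreme algorithm (described in the context) under an arbitrary communication pattern $G_1,G_2,\dots$ in which every communication graph $G_t$ is non-split, starting from arbitrary initial values $y_1(0),\dots,y_n(0)\in V$. Then for every round $t\ge 1$, \[ \Delta\big(y(t)\big)\le \sqrt{\tfrac{31}{32}}\;\Delta\big(y(t-1)\big), \] and for every $\varepsilon>0$ the convergence time satisfies $T(\varepsilon)\le \left\lceil \log_{\sqrt{32/31}} \frac{\Delta}{\varepsilon}\right\rceil$, where $\Delta=\Delta\big(y(0)\big)$ (i.e., $\Delta(y(\tau))\le\varepsilon$ for every integer $\tau\ge 0$ with $\tau\ge \lceil \log_{\sqrt{32/31}} (\Delta/\varepsilon)\rceil$). Moreover, if $V=\mathbb{R}$ (with the usual inner product), then $\Delta\big(y(t)\big)\le \tfrac34\,\Delta\big(y(t-1)\big)$ for every $t\ge1$, and $T(\varepsilon)\le \left\lceil \log_{4/3} \frac{\Delta}{\varepsilon}\right\rceil$.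
   Context: Dynamic network model: there are $n$ agents $1,\dots,n$ communicating in rounds $t=1,2,\dots$. In round $t$, communication is given by a directed graph $G_t$ on the vertex set $\{1,\dots,n\}$ containing every self-loop $(i,i)$; the message broadcast by $i$ in round $t$ is received by $j$ iff $(i,j)\in G_t$. A directed graph is non-split if every pair of nodes $i,j$ has a common in-neighbor $k$ (i.e., $(k,i)$ and $(k,j)$ are both edges). Each agent $i$ holds a value $y_i\in V$; $y_i(0)$ is its initial value and $y_i(t)$ its value at the end of round $t$; $y(t)=(y_1(t),\dots,y_n(t))$. ApproachExtreme algorithm: in round $t$ each agent $i$ broadcasts $y_i(t-1)$, lets $\mathrm{Rcv}_i(t)=\{y_j(t-1): (j,i)\in G_t\}$ be the set of received values, chooses $b\in \mathrm{Rcv}_i(t)$ maximizing $\lVert y_i(t-1)-b\rVert$ (ties broken arbitrarily), and sets $y_i(t)=(y_i(t-1)+b)/2$. Notation: for $x=(x_1,\dots,x_n)\in V^n$, $\Delta(x)=\max_{i,j}\lVert x_i-x_j\rVert$. The convergence time of an execution is $T(\varepsilon)=\min\{t\ge0 : \forall \tau\ge t,\ \Delta(y(\tau))\le\varepsilon\}$. *)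

theory Defs
  imports "HOL-Analysis.Analysis"
begin

text \<open>Agents are the elements of a finite (nonempty) type 'ag; a configuration is a map
  'ag to V.  Communication graphs are relations on 'ag; (i,j) in G means j receives from i.\<close>

definition diam :: "('ag::finite \<Rightarrow> 'v::real_normed_vector) \<Rightarrow> real" where
  "diam x = Max {norm (x i - x j) | i j. True}"

definition nonsplit :: "('ag \<times> 'ag) set \<Rightarrow> bool" where
  "nonsplit G \<longleftrightarrow> (\<forall>i j. \<exists>k. (k, i) \<in> G \<and> (k, j) \<in> G)"

definition has_selfloops :: "('ag \<times> 'ag) set \<Rightarrow> bool" where
  "has_selfloops G \<longleftrightarrow> (\<forall>i. (i, i) \<in> G)"

definition rcv :: "('ag \<times> 'ag) set \<Rightarrow> ('ag \<Rightarrow> 'v) \<Rightarrow> 'ag \<Rightarrow> 'v set" where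
  "rcv G x i = {x j | j. (j, i) \<in> G}"

text \<open>One round of ApproachExtreme (ties broken arbitrarily: any maximizer b is allowed).\<close>
definition approach_extreme_step ::
  "('ag \<times> 'ag) set \<Rightarrow> ('ag \<Rightarrow> 'v::real_normed_vector) \<Rightarrow> ('ag \<Rightarrow> 'v) \<Rightarrow> bool" where
  "approach_extreme_step G x x' \<longleftrightarrow>
     (\<forall>i. \<exists>b \<in> rcv G x i. (\<forall>b' \<in> rcv G x i. norm (x i - b') \<le> norm (x i - b))
                          \<and> x' i = (1/2) *\<^sub>R (x i + b))"

text \<open>An execution: y t is the configuration at the end of round t, G t the graph of round t (t \<ge> 1).\<close>
definition approach_extreme_exec ::
  "(nat \<Rightarrow> ('ag \<times> 'ag) set) \<Rightarrow> (nat \<Rightarrow> 'ag \<Rightarrow> 'v::real_normed_vector) \<Rightarrow> bool" where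
  "approach_extreme_exec G y \<longleftrightarrow> (\<forall>t\<ge>1. approach_extreme_step (G t) (y (t - 1)) (y t))"

definition conv_time :: "(nat \<Rightarrow> 'ag::finite \<Rightarrow> 'v::real_normed_vector) \<Rightarrow> real \<Rightarrow> nat" where
  "conv_time y \<epsilon> = (LEAST t. \<forall>\<tau>\<ge>t. diam (y \<tau>) \<le> \<epsilon>)"

end

theory Submission
  imports Defs
begin

text \<open>Fix agents \<open>i\<close>, \<open>j\<close> with current values \<open>a\<close>, \<open>c\<close>, let \<open>z\<close> be the value of a common
  in-neighbour and \<open>p\<close>, \<open>q\<close> the extreme values they average with.  All of \<open>a, c, p, q\<close> lie
  within \<open>D = \<Delta>(y(t-1))\<close> of each other, and \<open>u = \<parallel>a - z\<parallel> \<le> \<parallel>a - p\<parallel>\<close>, \<open>v = \<parallel>c - z\<parallel> \<le> \<parallel>c - q\<parallel>\<close>.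
  For \<open>L = a + p - c - q\<close> a polarization identity gives \<open>\<parallel>L\<parallel>\<^sup>2 \<le> 4D\<^sup>2 - u\<^sup>2 - v\<^sup>2\<close>, while the
  path \<open>a \<rightarrow> z \<rightarrow> c\<close> gives \<open>\<parallel>L\<parallel> \<le> u + v + D\<close>.  Either \<open>u + v \<ge> D/2\<close> and the first bound yields
  \<open>\<parallel>L\<parallel>\<^sup>2 \<le> 31D\<^sup>2/8\<close>, or the second yields \<open>\<parallel>L\<parallel> \<le> 3D/2\<close>; hence the new values are at distance
  \<open>\<parallel>L\<parallel>/2 \<le> \<surd>(31/32) D\<close>.  On the real line an order argument gives \<open>3D/4\<close> instead.\<close>

lemma norm_diff_sums_square_eq:
  fixes a c p q :: "'v::real_inner"
  shows "(norm (a + p - c - q))\<^sup>2 = (norm (a - c))\<^sup>2 + (norm (p - q))\<^sup>2 + (norm (a - q))\<^sup>2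
           + (norm (p - c))\<^sup>2 - (norm (a - p))\<^sup>2 - (norm (c - q))\<^sup>2"
  by (simp add: power2_norm_eq_inner inner_diff inner_add algebra_simps inner_commute)

lemma extreme_midpoints_dist_le_inner:
  fixes a c z p q :: "'v::real_inner"
  assumes "norm (a - c) \<le> D" "norm (p - q) \<le> D" "norm (a - q) \<le> D" "norm (p - c) \<le> D"
    and "norm (a - z) \<le> norm (a - p)" "norm (c - z) \<le> norm (c - q)"
  shows "norm ((1/2) *\<^sub>R (a + p) - (1/2) *\<^sub>R (c + q)) \<le> sqrt (31/32) * D"
proof -
  define L where "L = a + p - c - q"
  define u where "u = norm (a - z)"
  define v where "v = norm (c - z)"
  have "D \<ge> 0" using assms(1) norm_ge_zero order_trans by blast
  have L_square_le: "(norm L)\<^sup>2 \<le> 4 * D\<^sup>2 - u\<^sup>2 - v\<^sup>2"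
  proof -
    have "(norm (a - c))\<^sup>2 \<le> D\<^sup>2" "(norm (p - q))\<^sup>2 \<le> D\<^sup>2"
      "(norm (a - q))\<^sup>2 \<le> D\<^sup>2" "(norm (p - c))\<^sup>2 \<le> D\<^sup>2"
      using assms(1-4) by (auto intro!: power_mono)
    moreover have "u\<^sup>2 \<le> (norm (a - p))\<^sup>2" "v\<^sup>2 \<le> (norm (c - q))\<^sup>2"
      using assms(5,6) by (auto simp: u_def v_def intro!: power_mono)
    ultimately show ?thesis using norm_diff_sums_square_eq[of a p c q] unfolding L_def by linarith
  qed
  have L_le: "norm L \<le> u + v + D"
  proof -
    have "L = (a - z) + (z - c) + (p - q)" by (simp add: L_def algebra_simps)
    then have "norm L \<le> norm (a - z) + norm (z - c) + norm (p - q)"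
      by (metis norm_triangle_ineq order_trans add_right_mono)
    then show ?thesis using assms(2) by (simp add: u_def v_def norm_minus_commute)
  qed
  have "(norm L)\<^sup>2 \<le> 31/8 * D\<^sup>2"
  proof (cases "u + v \<ge> D/2")
    case True
    have "(D/2)\<^sup>2 \<le> (u + v)\<^sup>2" using True \<open>D \<ge> 0\<close> by (intro power_mono) auto
    also have "\<dots> \<le> 2 * (u\<^sup>2 + v\<^sup>2)" using sum_squares_ge_zero[of "u - v" 0]
      by (simp add: power2_eq_square algebra_simps)
    finally show ?thesis using L_square_le by (simp add: power2_eq_square)
  next
    case False
    then have "norm L \<le> 3/2 * D" using L_le by linarith
    then have "(norm L)\<^sup>2 \<le> (3/2 * D)\<^sup>2" by (intro power_mono) auto
    moreover have "(3/2 * D)\<^sup>2 \<le> 31/8 * D\<^sup>2" by (simp add: power2_eq_square)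
    ultimately show ?thesis by linarith
  qed
  have "(1/2) *\<^sub>R (a + p) - (1/2) *\<^sub>R (c + q) = (1/2) *\<^sub>R L"
    by (simp add: L_def algebra_simps)
  then have "norm ((1/2) *\<^sub>R (a + p) - (1/2) *\<^sub>R (c + q)) = sqrt ((norm L)\<^sup>2 / 4)"
    by (simp add: real_sqrt_divide)
  also have "\<dots> \<le> sqrt (31/32 * D\<^sup>2)"
    using \<open>(norm L)\<^sup>2 \<le> 31/8 * D\<^sup>2\<close> by (intro real_sqrt_le_mono) simp
  also have "\<dots> = sqrt (31/32) * sqrt (D\<^sup>2)" by (simp only: real_sqrt_mult)
  also have "\<dots> = sqrt (31/32) * D" using \<open>D \<ge> 0\<close> by simp
  finally show ?thesis .
qed

lemma extreme_midpoints_dist_le_real: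
  fixes a c z p q :: real
  assumes "norm (a - c) \<le> D" "norm (p - q) \<le> D" "norm (a - q) \<le> D" "norm (p - c) \<le> D"
    and "norm (a - z) \<le> norm (a - p)" "norm (c - z) \<le> norm (c - q)"
  shows "norm ((1/2) *\<^sub>R (a + p) - (1/2) *\<^sub>R (c + q)) \<le> 3/4 * D"
proof -
  have "\<bar>a - c\<bar> \<le> D" "\<bar>p - q\<bar> \<le> D" "\<bar>a - q\<bar> \<le> D" "\<bar>p - c\<bar> \<le> D"
    "\<bar>a - z\<bar> \<le> \<bar>a - p\<bar>" "\<bar>c - z\<bar> \<le> \<bar>c - q\<bar>"
    using assms by simp_all
  \<comment> \<open>If \<open>a + p \<ge> c + q\<close>, then \<open>a + p - c - q \<le> 2 (max a p - min c q) - \<bar>a - p\<bar> - \<bar>c - q\<bar> \<le> 2D - \<bar>a - c\<bar>\<close>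
    and also \<open>a + p - c - q \<le> \<bar>a - c\<bar> + D\<close>; add the two.\<close>
  then have "\<bar>(a + p) - (c + q)\<bar> \<le> 3/2 * D" by (auto simp: abs_if split: if_splits)
  then show ?thesis by (simp add: abs_if field_simps split: if_splits)
qed

lemma diam_eq_Max_image:
  fixes x :: "'ag::finite \<Rightarrow> 'v::real_normed_vector"
  shows "diam x = Max ((\<lambda>(i, j). norm (x i - x j)) ` UNIV)"
  unfolding diam_def by (rule arg_cong[where f = Max]) auto

lemma norm_le_diam:
  fixes x :: "'ag::finite \<Rightarrow> 'v::real_normed_vector"
  shows "norm (x i - x j) \<le> diam x"
  unfolding diam_eq_Max_image by (rule Max_ge) auto

lemma diam_nonneg: "diam (x :: 'ag::finite \<Rightarrow> 'v::real_normed_vector) \<ge> 0"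
  using norm_le_diam[of x undefined undefined] by simp

lemma diam_leI:
  fixes x :: "'ag::finite \<Rightarrow> 'v::real_normed_vector"
  assumes "\<And>i j. norm (x i - x j) \<le> C"
  shows "diam x \<le> C"
  unfolding diam_eq_Max_image using assms by (subst Max_le_iff) auto

lemma approach_extreme_step_diam_le:
  fixes x x' :: "'ag::finite \<Rightarrow> 'v::real_normed_vector"
  assumes step: "approach_extreme_step G x x'" and "nonsplit G"
    and extreme_midpoints_dist_le: "\<And>(a::'v) c z p q D.
       norm (a - c) \<le> D \<Longrightarrow> norm (p - q) \<le> D \<Longrightarrow> norm (a - q) \<le> D \<Longrightarrow> norm (p - c) \<le> D \<Longrightarrow>
       norm (a - z) \<le> norm (a - p) \<Longrightarrow> norm (c - z) \<le> norm (c - q) \<Longrightarrow>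
       norm ((1/2) *\<^sub>R (a + p) - (1/2) *\<^sub>R (c + q)) \<le> K * D"
  shows "diam x' \<le> K * diam x"
proof (rule diam_leI)
  fix i j
  obtain k where "(k, i) \<in> G" "(k, j) \<in> G" using \<open>nonsplit G\<close> unfolding nonsplit_def by blast
  then have common: "x k \<in> rcv G x i" "x k \<in> rcv G x j" unfolding rcv_def by blast+
  obtain p where "p \<in> rcv G x i" and p_max: "\<forall>b \<in> rcv G x i. norm (x i - b) \<le> norm (x i - p)"
    and "x' i = (1/2) *\<^sub>R (x i + p)"
    using step unfolding approach_extreme_step_def by blast
  obtain q where "q \<in> rcv G x j" and q_max: "\<forall>b \<in> rcv G x j. norm (x j - b) \<le> norm (x j - q)"
    and "x' j = (1/2) *\<^sub>R (x j + q)"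
    using step unfolding approach_extreme_step_def by blast
  from \<open>p \<in> rcv G x i\<close> \<open>q \<in> rcv G x j\<close> obtain m m' where "p = x m" "q = x m'"
    unfolding rcv_def by blast
  show "norm (x' i - x' j) \<le> K * diam x"
    unfolding \<open>x' i = _\<close> \<open>x' j = _\<close>
    by (rule extreme_midpoints_dist_le[where z = "x k"])
      (use common p_max q_max in \<open>auto simp: \<open>p = x m\<close> \<open>q = x m'\<close> norm_le_diam\<close>)
qed

lemma diam_le_power_mult:
  fixes y :: "nat \<Rightarrow> 'ag::finite \<Rightarrow> 'v::real_normed_vector"
  assumes "K \<ge> 0" and decay: "\<And>t. t \<ge> 1 \<Longrightarrow> diam (y t) \<le> K * diam (y (t - 1))"
  shows "diam (y t) \<le> K ^ t * diam (y 0)"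
proof (induction t)
  case (Suc t)
  have "diam (y (Suc t)) \<le> K * diam (y t)" using decay[of "Suc t"] by simp
  also have "\<dots> \<le> K * (K ^ t * diam (y 0))" using Suc \<open>K \<ge> 0\<close> by (rule mult_left_mono)
  finally show ?case by simp
qed simp

lemma power_mult_le_if_ceiling_log_le:
  fixes b D \<epsilon> :: real
  assumes "b > 1" "K * b = 1" "D \<ge> 0" "\<epsilon> > 0" and "\<lceil>log b (D / \<epsilon>)\<rceil> \<le> int \<tau>"
  shows "K ^ \<tau> * D \<le> \<epsilon>"
proof (cases "D = 0")
  case True
  then show ?thesis using \<open>\<epsilon> > 0\<close> by simp
next
  case False
  have "K > 0" using \<open>b > 1\<close> \<open>K * b = 1\<close> by (metis zero_less_mult_pos2 zero_less_one less_trans)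
  have "log b (D / \<epsilon>) \<le> real \<tau>"
    using le_of_int_ceiling[of "log b (D / \<epsilon>)"] \<open>\<lceil>log b (D / \<epsilon>)\<rceil> \<le> int \<tau>\<close> by linarith
  then have "D / \<epsilon> \<le> b ^ \<tau>"
    using \<open>b > 1\<close> \<open>D \<ge> 0\<close> False \<open>\<epsilon> > 0\<close> by (simp add: log_le_iff powr_realpow)
  then have "K ^ \<tau> * D \<le> K ^ \<tau> * (\<epsilon> * b ^ \<tau>)"
    using \<open>\<epsilon> > 0\<close> \<open>K > 0\<close> by (intro mult_left_mono) (simp_all add: field_simps)
  also have "\<dots> = \<epsilon> * (K * b) ^ \<tau>" by (simp add: power_mult_distrib)
  finally show ?thesis using \<open>K * b = 1\<close> by simp
qed

lemma conv_time_le: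
  assumes "\<And>\<tau>. \<tau> \<ge> T \<Longrightarrow> diam (y \<tau>) \<le> \<epsilon>"
  shows "conv_time y \<epsilon> \<le> T"
  unfolding conv_time_def using assms by (intro Least_le) blast

lemma approach_extreme_exec_convergence:
  fixes G :: "nat \<Rightarrow> ('ag::finite \<times> 'ag) set" and y :: "nat \<Rightarrow> 'ag \<Rightarrow> 'v::real_normed_vector"
  assumes exec: "approach_extreme_exec G y" and nonsplit: "\<And>t. t \<ge> 1 \<Longrightarrow> nonsplit (G t)"
    and "b > 1" "K * b = 1"
    and extreme_midpoints_dist_le: "\<And>(a::'v) c z p q D.
       norm (a - c) \<le> D \<Longrightarrow> norm (p - q) \<le> D \<Longrightarrow> norm (a - q) \<le> D \<Longrightarrow> norm (p - c) \<le> D \<Longrightarrow>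
       norm (a - z) \<le> norm (a - p) \<Longrightarrow> norm (c - z) \<le> norm (c - q) \<Longrightarrow>
       norm ((1/2) *\<^sub>R (a + p) - (1/2) *\<^sub>R (c + q)) \<le> K * D"
  shows "(\<forall>t\<ge>1. diam (y t) \<le> K * diam (y (t - 1))) \<and>
         (\<forall>\<epsilon>>0. conv_time y \<epsilon> \<le> nat \<lceil>log b (diam (y 0) / \<epsilon>)\<rceil> \<and>
            (\<forall>\<tau>. \<lceil>log b (diam (y 0) / \<epsilon>)\<rceil> \<le> int \<tau> \<longrightarrow> diam (y \<tau>) \<le> \<epsilon>))"
proof -
  have decay: "diam (y t) \<le> K * diam (y (t - 1))" if "t \<ge> 1" for t
    using exec nonsplit[OF that] that extreme_midpoints_dist_le
    unfolding approach_extreme_exec_def by (blast intro: approach_extreme_step_diam_le)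
  have "K \<ge> 0" using \<open>b > 1\<close> \<open>K * b = 1\<close> by (metis zero_less_mult_pos2 zero_less_one less_trans less_imp_le)
  have small: "diam (y \<tau>) \<le> \<epsilon>" if "\<epsilon> > 0" "\<lceil>log b (diam (y 0) / \<epsilon>)\<rceil> \<le> int \<tau>" for \<epsilon> \<tau>
    using diam_le_power_mult[of K y \<tau>, OF \<open>K \<ge> 0\<close> decay]
      power_mult_le_if_ceiling_log_le[OF \<open>b > 1\<close> \<open>K * b = 1\<close> diam_nonneg that]
    by linarith
  then have "conv_time y \<epsilon> \<le> nat \<lceil>log b (diam (y 0) / \<epsilon>)\<rceil>" if "\<epsilon> > 0" for \<epsilon>
    using that by (intro conv_time_le) (simp add: nat_le_iff)
  with decay small show ?thesis by blast
qed

theorem theorem2: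
  shows "(\<forall>(G :: nat \<Rightarrow> ('ag::finite \<times> 'ag) set) (y :: nat \<Rightarrow> 'ag \<Rightarrow> 'v::real_inner).
            (\<forall>t\<ge>1. has_selfloops (G t) \<and> nonsplit (G t)) \<and> approach_extreme_exec G y \<longrightarrow>
              (\<forall>t\<ge>1. diam (y t) \<le> sqrt (31/32) * diam (y (t - 1))) \<and>
              (\<forall>\<epsilon>>0. conv_time y \<epsilon> \<le> nat \<lceil>log (sqrt (32/31)) (diam (y 0) / \<epsilon>)\<rceil> \<and>
                  (\<forall>\<tau>::nat. of_int \<lceil>log (sqrt (32/31)) (diam (y 0) / \<epsilon>)\<rceil> \<le> int \<tau> \<longrightarrow>
                     diam (y \<tau>) \<le> \<epsilon>)))
       \<and> (\<forall>(G :: nat \<Rightarrow> ('ag \<times> 'ag) set) (y :: nat \<Rightarrow> 'ag \<Rightarrow> real).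
            (\<forall>t\<ge>1. has_selfloops (G t) \<and> nonsplit (G t)) \<and> approach_extreme_exec G y \<longrightarrow>
              (\<forall>t\<ge>1. diam (y t) \<le> 3/4 * diam (y (t - 1))) \<and>
              (\<forall>\<epsilon>>0. conv_time y \<epsilon> \<le> nat \<lceil>log (4/3) (diam (y 0) / \<epsilon>)\<rceil> \<and>
                  (\<forall>\<tau>::nat. \<lceil>log (4/3) (diam (y 0) / \<epsilon>)\<rceil> \<le> int \<tau> \<longrightarrow>
                     diam (y \<tau>) \<le> \<epsilon>)))"
proof (rule conjI; intro allI impI; elim conjE)
  fix G :: "nat \<Rightarrow> ('ag \<times> 'ag) set" and y :: "nat \<Rightarrow> 'ag \<Rightarrow> 'v"
  assume "\<forall>t\<ge>1. has_selfloops (G t) \<and> nonsplit (G t)" "approach_extreme_exec G y"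
  moreover have "sqrt (31/32) * sqrt (32/31) = (1::real)" by (simp flip: real_sqrt_mult)
  ultimately show "(\<forall>t\<ge>1. diam (y t) \<le> sqrt (31/32) * diam (y (t - 1))) \<and>
      (\<forall>\<epsilon>>0. conv_time y \<epsilon> \<le> nat \<lceil>log (sqrt (32/31)) (diam (y 0) / \<epsilon>)\<rceil> \<and>
        (\<forall>\<tau>::nat. of_int \<lceil>log (sqrt (32/31)) (diam (y 0) / \<epsilon>)\<rceil> \<le> int \<tau> \<longrightarrow> diam (y \<tau>) \<le> \<epsilon>))"
    unfolding of_int_eq_id id_apply
    by (intro approach_extreme_exec_convergence extreme_midpoints_dist_le_inner) auto
next
  fix G :: "nat \<Rightarrow> ('ag \<times> 'ag) set" and y :: "nat \<Rightarrow> 'ag \<Rightarrow> real"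
  assume "\<forall>t\<ge>1. has_selfloops (G t) \<and> nonsplit (G t)" "approach_extreme_exec G y"
  then show "(\<forall>t\<ge>1. diam (y t) \<le> 3/4 * diam (y (t - 1))) \<and>
      (\<forall>\<epsilon>>0. conv_time y \<epsilon> \<le> nat \<lceil>log (4/3) (diam (y 0) / \<epsilon>)\<rceil> \<and>
        (\<forall>\<tau>::nat. \<lceil>log (4/3) (diam (y 0) / \<epsilon>)\<rceil> \<le> int \<tau> \<longrightarrow> diam (y \<tau>) \<le> \<epsilon>))"
    by (intro approach_extreme_exec_convergence extreme_midpoints_dist_le_real) auto
qed

end
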